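(* Let $r_0\in\mathbb{R}^7$ and let $\vartheta:\mathbb{R}^7\times\mathbb{R}^2\to\mathbb{R}$ be a function such that (i) for every $z=(z_1,z_2)\in\mathbb{R}^2$: $\vartheta(r_0,z)\le 0$ if and only if there exist $t_f\in[0,\infty)$ and $(\mathbf r,\mathbf u)\in\Pi^{\mathcal K,\mathcal C}_{r_0,t_f}$ with $J_1(\mathbf r(1),t_f)\le z_1$ and $J_2(\mathbf r(1),t_f)\le z_2$; (ii) for all $z,z'\in\mathbb{R}^2$ with $z\le z'$ (componentwise), $\vartheta(r_0,z)\ge\vartheta(r_0,z')$. Let $z^*(r_0)=(z^*_1(r_0),z^*_2(r_0))$ be the utopian point and assume $\Pi^{\mathcal K,\mathcal C}_{r_0,z_2^*(r_0)}\neq\emptyset$. For $\mu=(\mu_1,\mu_2)\in[0,1]^2$ define $$\Theta_{r_0}(\mu):=\inf\Big\{\tau\ge 0\;:\;\vartheta(r_0,z^*(r_0)+\mu\tau)\le 0\ \text{and}\ \tau<\tfrac{m_{\mathrm{prop}}}{\mu_1}\Big\}\in[0,\infty],$$ and $$\Sigma_{r_0}:=\Big\{z^*(r_0)+\mu\,\Theta_{r_0}(\mu)\;:\;\mu\in[0,1]^2,\ \mu_1+\mu_2=1\Big\}.$$ Then every trajectory reconstructed from $\Sigma_{r_0}$ is weakly Pareto optimal: if $z\in\Sigma_{r_0}$, $t_f\in[0,\infty)$ and $(\mathbf r,\mathbf u)\in\Pi^{\mathcal K,\mathcal C}_{r_0,t_f}$ satisfy $J(\mathbf r(1),t_f)\le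 z$, then there is no $\hat t_f\in[0,\infty)$ and no $(\mathbf x,\mathbf v)\in\Pi^{\mathcal K,\mathcal C}_{r_0,\hat t_f}$ with $J(\mathbf x(1),\hat t_f)<J(\mathbf r(1),t_f)$.
   Context: Fixed data: a rotation rate $\Omega\ge 0$, an exhaust velocity $v_{e}>0$, masses $m_{\mathrm{dry}}>0$, $m_{\mathrm{prop}}>0$ with $m_{\min}:=m_{\mathrm{dry}}$, $m_{\max}:=m_{\mathrm{dry}}+m_{\mathrm{prop}}$, radii $0<\rho_{\min}<\rho_{\max}$, a gravitational potential $U:\mathbb{R}^3\to\mathbb{R}$ with partial derivatives $U_x,U_y,U_z$, and a control set $\mathcal U\subset\mathbb{R}^3$. States are $r=(x,y,z,v_x,v_y,v_z,m)\in\mathbb{R}^7$ and the dynamics are $\tilde f(r,u)=\big(v_x,\ v_y,\ v_z,\ U_x(x,y,z)+\Omega^2x+2\Omega v_y+\tfrac{u_x}{m},\ U_y(x,y,z)+\Omega^2y-2\Omega v_x+\tfrac{u_y}{m},\ U_z(x,y,z)+\tfrac{u_z}{m},\ -\tfrac{\sqrt{u_x^2+u_y^2+u_z^2}}{v_e}\big)$ for $u=(u_x,u_y,u_z)\in\mathcal U$. For $t_f\ge0$ put $f(r,u,t_f):=t_f\,\tilde f(r,u)$ (time rescaled to $[0,1]$). $\mathcal U_{ad}$ is the set of Lebesgue measurable functions with values in $\mathcal U$. $\mathcal K_0:=\{r\in\mathbb{R}^7:\sqrt{x^2+y^2+z^2}\in[\rho_{\min},\rho_{\max}],\ m\in(m_{\min},m_{\max}]\}$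 and $\mathcal K:=\{r\in\mathcal K_0:\exists u\in\mathcal U,\ \tilde f(r,u)\cdot\eta_r<0\}$, where $\eta_r$ is the exterior normal to $\mathcal K$ at $r$. Given $r_{\mathrm{target}}\in\mathbb{R}^7$ and $\epsilon>0$, $\mathcal C:=\{r\in\mathcal K:|r_{\mathrm{target}}-r|<\epsilon\}$, assumed nonempty and closed. $\Pi_{r_0,t_f}$ is the set of pairs $(\mathbf r,\mathbf u)$ with $\mathbf r\in W^{1,1}([0,1];\mathbb{R}^7)$, $\mathbf u\in\mathcal U_{ad}$, $\dot{\mathbf r}(s)=f(\mathbf r(s),\mathbf u(s),t_f)$ for $s\in[0,1]$, $\mathbf r(0)=r_0$. $\Pi^{\mathcal K,\mathcal C}_{r_0,t_f}$ is the subset with $\mathbf r(s)\in\mathcal K$ for all $s\in[0,1]$ and $\mathbf r(1)$ in the interior of $\mathcal C$. $\pi:=\{(r_0,t_f)\in\mathcal K\times[0,\infty):\Pi^{\mathcal K,\mathcal C}_{r_0,t_f}\ne\emptyset\}$. Objectives: $J(r_f,t_f)=(J_1,J_2)$ with $J_1(r_f,t_f):=-(r_f)_7$ (minus the final mass) and $J_2(r_f,t_f):=t_f$. Vector order: $a\le b$ iff $a_i\le b_i$ for all $i$; $a<b$ iff $a_i<b_i$ for all $i$. Utopian point: $z_i^*(r_0):=\inf\{J_i(\mathbf r(1),t_f): (r_0,t_f)\in\pi,\ (\mathbf r,\mathbf u)\in\Pi^{\mathcal K,\mathcal C}_{r_0,t_f}\}$, $i=1,2$. *)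

theory Defs
  imports "HOL-Analysis.Analysis"
begin

text \<open>States are vectors in real^7; component i (i = 1..7) is r $ i
  (type 7 has the seven distinct elements 1,...,6,7=0).
  Controls are vectors in real^3 with components u $ 1, u $ 2, u $ 3.\<close>

record mission =
  Omega    :: real
  v_e      :: real
  m_dry    :: real
  m_prop   :: real
  rho_min  :: real
  rho_max  :: real
  pot      :: "real \<Rightarrow> real \<Rightarrow> real \<Rightarrow> real"
  pot_x    :: "real \<Rightarrow> real \<Rightarrow> real \<Rightarrow> real"
  pot_y    :: "real \<Rightarrow> real \<Rightarrow> real \<Rightarrow> real"
  pot_z    :: "real \<Rightarrow> real \<Rightarrow> real \<Rightarrow> real"
  ctrl_set :: "(real^3) set"
  r_target :: "real^7"
  eps      :: real

definition valid_mission :: "mission \<Rightarrow> bool" where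
  "valid_mission P \<longleftrightarrow>
     Omega P \<ge> 0 \<and> v_e P > 0 \<and> m_dry P > 0 \<and> m_prop P > 0 \<and>
     0 < rho_min P \<and> rho_min P < rho_max P \<and> eps P > 0 \<and>
     (\<forall>x y z. ((\<lambda>t. pot P t y z) has_real_derivative pot_x P x y z) (at x)) \<and>
     (\<forall>x y z. ((\<lambda>t. pot P x t z) has_real_derivative pot_y P x y z) (at y)) \<and>
     (\<forall>x y z. ((\<lambda>t. pot P x y t) has_real_derivative pot_z P x y z) (at z))"

definition m_min :: "mission \<Rightarrow> real" where "m_min P = m_dry P"
definition m_max :: "mission \<Rightarrow> real" where "m_max P = m_dry P + m_prop P"

definition ftil :: "mission \<Rightarrow> real^7 \<Rightarrow> real^3 \<Rightarrow> real^7" where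
  "ftil P r u = vector
     [ r$4, r$5, r$6,
       pot_x P (r$1) (r$2) (r$3) + (Omega P)\<^sup>2 * r$1 + 2 * Omega P * r$5 + u$1 / r$7,
       pot_y P (r$1) (r$2) (r$3) + (Omega P)\<^sup>2 * r$2 - 2 * Omega P * r$4 + u$2 / r$7,
       pot_z P (r$1) (r$2) (r$3) + u$3 / r$7,
       - sqrt ((u$1)\<^sup>2 + (u$2)\<^sup>2 + (u$3)\<^sup>2) / v_e P ]"

definition fdyn :: "mission \<Rightarrow> real^7 \<Rightarrow> real^3 \<Rightarrow> real \<Rightarrow> real^7" where
  "fdyn P r u tf = tf *\<^sub>R ftil P r u"

definition radius :: "real^7 \<Rightarrow> real" where
  "radius r = sqrt ((r$1)\<^sup>2 + (r$2)\<^sup>2 + (r$3)\<^sup>2)"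

definition K0 :: "mission \<Rightarrow> (real^7) set" where
  "K0 P = {r. rho_min P \<le> radius r \<and> radius r \<le> rho_max P \<and>
              m_min P < r$7 \<and> r$7 \<le> m_max P}"

text \<open>Exterior (unit) normals of K0 at r: one for each active boundary
  constraint (outer sphere, inner sphere, full-mass face).\<close>
definition ext_normals :: "mission \<Rightarrow> real^7 \<Rightarrow> (real^7) set" where
  "ext_normals P r =
     {\<eta>. (radius r = rho_max P \<and>
            \<eta> = vector [r$1 / radius r, r$2 / radius r, r$3 / radius r, 0, 0, 0, 0]) \<or>
         (radius r = rho_min P \<and>
            \<eta> = vector [- r$1 / radius r, - r$2 / radius r, - r$3 / radius r, 0, 0, 0, 0]) \<or>
         (r$7 = m_max P \<and> \<eta> = vector [0, 0, 0, 0, 0, 0, 1])}"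

definition Kset :: "mission \<Rightarrow> (real^7) set" where
  "Kset P = {r \<in> K0 P. \<exists>u \<in> ctrl_set P. \<forall>\<eta> \<in> ext_normals P r. ftil P r u \<bullet> \<eta> < 0}"

definition Cset :: "mission \<Rightarrow> (real^7) set" where
  "Cset P = {r \<in> Kset P. norm (r_target P - r) < eps P}"

text \<open>Admissible state/control pairs: u Lebesgue measurable on [0,1] with
  values in the control set, r a W^{1,1} (absolutely continuous) solution,
  i.e. r(s) = r0 + integral of the (integrable) dynamics from 0 to s.\<close>
definition Pi_set :: "mission \<Rightarrow> real^7 \<Rightarrow> real \<Rightarrow>
    ((real \<Rightarrow> real^7) \<times> (real \<Rightarrow> real^3)) set" where
  "Pi_set P r0 tf = {(r, u).
     u \<in> borel_measurable (lebesgue_on {0..1}) \<and>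
     (\<forall>s \<in> {0..1}. u s \<in> ctrl_set P) \<and>
     (\<lambda>s. fdyn P (r s) (u s) tf) absolutely_integrable_on {0..1} \<and>
     (\<forall>s \<in> {0..1}. r s = r0 + integral {0..s} (\<lambda>\<sigma>. fdyn P (r \<sigma>) (u \<sigma>) tf))}"

definition Pi_KC :: "mission \<Rightarrow> real^7 \<Rightarrow> real \<Rightarrow>
    ((real \<Rightarrow> real^7) \<times> (real \<Rightarrow> real^3)) set" where
  "Pi_KC P r0 tf = {(r, u) \<in> Pi_set P r0 tf.
     (\<forall>s \<in> {0..1}. r s \<in> Kset P) \<and> r 1 \<in> interior (Cset P)}"

definition pi_set :: "mission \<Rightarrow> ((real^7) \<times> real) set" where
  "pi_set P = {(r0, tf). r0 \<in> Kset P \<and> tf \<ge> 0 \<and> Pi_KC P r0 tf \<noteq> {}}"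

definition J1 :: "real^7 \<Rightarrow> real \<Rightarrow> real" where "J1 rf tf = - rf$7"
definition J2 :: "real^7 \<Rightarrow> real \<Rightarrow> real" where "J2 rf tf = tf"

definition z1star :: "mission \<Rightarrow> real^7 \<Rightarrow> real" where
  "z1star P r0 = Inf {J1 (r 1) tf | r u tf. (r0, tf) \<in> pi_set P \<and> (r, u) \<in> Pi_KC P r0 tf}"
definition z2star :: "mission \<Rightarrow> real^7 \<Rightarrow> real" where
  "z2star P r0 = Inf {J2 (r 1) tf | r u tf. (r0, tf) \<in> pi_set P \<and> (r, u) \<in> Pi_KC P r0 tf}"

text \<open>Theta_{r0}(mu) in [0,infinity]; m_prop/mu_1 is taken in the extended
  reals, so that it equals infinity when mu_1 = 0.\<close>
definition Theta :: "mission \<Rightarrow> (real^7 \<Rightarrow> real \<times> real \<Rightarrow> real) \<Rightarrow> real^7 \<Rightarrow>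
    real \<times> real \<Rightarrow> ereal" where
  "Theta P \<theta> r0 \<mu> = Inf {ereal \<tau> | \<tau>. \<tau> \<ge> 0 \<and>
      \<theta> r0 (z1star P r0 + fst \<mu> * \<tau>, z2star P r0 + snd \<mu> * \<tau>) \<le> 0 \<and>
      ereal \<tau> < ereal (m_prop P) / ereal (fst \<mu>)}"

definition Sigma_set :: "mission \<Rightarrow> (real^7 \<Rightarrow> real \<times> real \<Rightarrow> real) \<Rightarrow> real^7 \<Rightarrow>
    (ereal \<times> ereal) set" where
  "Sigma_set P \<theta> r0 = {(ereal (z1star P r0) + ereal (fst \<mu>) * Theta P \<theta> r0 \<mu>,
                          ereal (z2star P r0) + ereal (snd \<mu>) * Theta P \<theta> r0 \<mu>) | \<mu>.
      0 \<le> fst \<mu> \<and> fst \<mu> \<le> 1 \<and> 0 \<le> snd \<mu> \<and> snd \<mu> \<le> 1 \<and> fst \<mu> + snd \<mu> = 1}"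

end

theory Submission
  imports Defs
begin

text \<open>Every attainable objective vector lies componentwise above the utopian point \<open>z\<^sup>*\<close>.
  For \<open>\<mu>\<close> with positive entries, a minimal-time trajectory is dominated by a point of the
  ray \<open>z\<^sup>* + \<mu> \<tau>\<close> with \<open>\<tau>\<close> below the mass bound, so \<open>\<Theta>(\<mu>)\<close> is finite. If a trajectory
  \<open>x\<close> strictly improved on a point dominated by \<open>z\<^sup>* + \<mu> \<Theta>(\<mu>)\<close>, then \<open>J(x)\<close> would
  be dominated by \<open>z\<^sup>* + \<mu> \<tau>\<close> for an admissible \<open>\<tau> < \<Theta>(\<mu>)\<close>, contradicting the
  minimality of \<open>\<Theta>(\<mu>)\<close>. If an entry of \<open>\<mu>\<close> vanishes, the corresponding component
  of the point is the utopian value itself, which no trajectory improves on strictly.\<close>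

lemma Pi_KC_endpoints_in_Kset:
  assumes "(x, v) \<in> Pi_KC P r0 tf"
  shows "r0 \<in> Kset P" "x 1 \<in> Kset P"
proof -
  have "x 0 = r0 + integral {0..0} (\<lambda>\<sigma>. fdyn P (x \<sigma>) (v \<sigma>) tf)"
    using assms unfolding Pi_KC_def Pi_set_def by auto
  then have "x 0 = r0" by simp
  moreover have "x 0 \<in> Kset P" "x 1 \<in> Kset P"
    using assms unfolding Pi_KC_def by auto
  ultimately show "r0 \<in> Kset P" "x 1 \<in> Kset P" by auto
qed

lemma J1_final_bounds:
  assumes "(x, v) \<in> Pi_KC P r0 tf"
  shows "- m_max P \<le> J1 (x 1) tf" "J1 (x 1) tf < - m_min P"
  using Pi_KC_endpoints_in_Kset(2)[OF assms] unfolding Kset_def K0_def J1_def by auto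

lemma pi_setI:
  assumes "(x, v) \<in> Pi_KC P r0 tf" "tf \<ge> 0"
  shows "(r0, tf) \<in> pi_set P"
  using assms Pi_KC_endpoints_in_Kset(1)[OF assms(1)] unfolding pi_set_def by auto

lemma z1star_le_J1:
  assumes "(x, v) \<in> Pi_KC P r0 tf" "tf \<ge> 0"
  shows "z1star P r0 \<le> J1 (x 1) tf"
  unfolding z1star_def
proof (rule cInf_lower)
  show "J1 (x 1) tf \<in> {J1 (r 1) tf | r u tf. (r0, tf) \<in> pi_set P \<and> (r, u) \<in> Pi_KC P r0 tf}"
    using assms pi_setI[OF assms] by blast
  show "bdd_below {J1 (r 1) tf | r u tf. (r0, tf) \<in> pi_set P \<and> (r, u) \<in> Pi_KC P r0 tf}"
    using J1_final_bounds(1) by (intro bdd_belowI[of _ "- m_max P"]) blast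
qed

lemma z2star_le_J2:
  assumes "(x, v) \<in> Pi_KC P r0 tf" "tf \<ge> 0"
  shows "z2star P r0 \<le> J2 (x 1) tf"
  unfolding z2star_def
proof (rule cInf_lower)
  show "J2 (x 1) tf \<in> {J2 (r 1) tf | r u tf. (r0, tf) \<in> pi_set P \<and> (r, u) \<in> Pi_KC P r0 tf}"
    using assms pi_setI[OF assms] by blast
  show "bdd_below {J2 (r 1) tf | r u tf. (r0, tf) \<in> pi_set P \<and> (r, u) \<in> Pi_KC P r0 tf}"
    unfolding J2_def pi_set_def by (intro bdd_belowI[of _ 0]) auto
qed

lemma z1star_ge_neg_m_max:
  assumes "(x, v) \<in> Pi_KC P r0 tf" "tf \<ge> 0"
  shows "- m_max P \<le> z1star P r0"
  unfolding z1star_def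
proof (rule cInf_greatest)
  show "{J1 (r 1) tf | r u tf. (r0, tf) \<in> pi_set P \<and> (r, u) \<in> Pi_KC P r0 tf} \<noteq> {}"
    using assms pi_setI[OF assms] by blast
qed (use J1_final_bounds(1) in blast)

lemma z2star_nonneg:
  assumes "(x, v) \<in> Pi_KC P r0 tf" "tf \<ge> 0"
  shows "0 \<le> z2star P r0"
  unfolding z2star_def
proof (rule cInf_greatest)
  show "{J2 (r 1) tf | r u tf. (r0, tf) \<in> pi_set P \<and> (r, u) \<in> Pi_KC P r0 tf} \<noteq> {}"
    using assms pi_setI[OF assms] by blast
qed (auto simp: J2_def pi_set_def)

definition ray_params :: "mission \<Rightarrow> (real^7 \<Rightarrow> real \<times> real \<Rightarrow> real) \<Rightarrow> real^7 \<Rightarrow>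
    real \<times> real \<Rightarrow> real set" where
  "ray_params P \<theta> r0 \<mu> = {\<tau>. \<tau> \<ge> 0 \<and>
      \<theta> r0 (z1star P r0 + fst \<mu> * \<tau>, z2star P r0 + snd \<mu> * \<tau>) \<le> 0 \<and>
      ereal \<tau> < ereal (m_prop P) / ereal (fst \<mu>)}"

lemma Theta_eq_Inf_ray_params: "Theta P \<theta> r0 \<mu> = Inf (ereal ` ray_params P \<theta> r0 \<mu>)"
  unfolding Theta_def ray_params_def by (rule arg_cong[where f = Inf]) blast

lemma bdd_below_ray_params: "bdd_below (ray_params P \<theta> r0 \<mu>)"
  unfolding ray_params_def by (rule bdd_belowI[of _ 0]) auto

lemma Theta_eq_ereal_Inf:
  assumes "ray_params P \<theta> r0 \<mu> \<noteq> {}"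
  shows "Theta P \<theta> r0 \<mu> = ereal (Inf (ray_params P \<theta> r0 \<mu>))"
  using Theta_eq_Inf_ray_params ereal_Inf'[OF bdd_below_ray_params assms] by simp

lemma ray_params_pos:
  assumes "fst \<mu> > 0"
  shows "ray_params P \<theta> r0 \<mu> = {\<tau>. \<tau> \<ge> 0 \<and>
      \<theta> r0 (z1star P r0 + fst \<mu> * \<tau>, z2star P r0 + snd \<mu> * \<tau>) \<le> 0 \<and>
      \<tau> < m_prop P / fst \<mu>}"
  using assms unfolding ray_params_def by simp

lemma Inf_ray_params_less:
  assumes "fst \<mu> > 0" "ray_params P \<theta> r0 \<mu> \<noteq> {}"
  shows "Inf (ray_params P \<theta> r0 \<mu>) < m_prop P / fst \<mu>"
proof -
  obtain \<tau> where \<tau>: "\<tau> \<in> ray_params P \<theta> r0 \<mu>" using assms(2) by blast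
  then have "Inf (ray_params P \<theta> r0 \<mu>) \<le> \<tau>"
    by (rule cInf_lower[OF _ bdd_below_ray_params])
  also have "\<tau> < m_prop P / fst \<mu>" using \<tau> unfolding ray_params_pos[OF assms(1)] by simp
  finally show ?thesis .
qed

lemma ray_params_nonempty:
  assumes feasible: "\<And>tf r u z1 z2. tf \<ge> 0 \<Longrightarrow> (r, u) \<in> Pi_KC P r0 tf \<Longrightarrow>
        J1 (r 1) tf \<le> z1 \<Longrightarrow> J2 (r 1) tf \<le> z2 \<Longrightarrow> \<theta> r0 (z1, z2) \<le> 0"
    and min_time: "Pi_KC P r0 (z2star P r0) \<noteq> {}" and z2: "0 \<le> z2star P r0"
    \<comment> \<open>\<open>z2\<close> does not follow from \<open>min_time\<close>: a negative time is never in \<open>pi_set\<close>,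
      and then \<open>z2star\<close> is the unspecified infimum of the empty set.\<close>
    and \<mu>: "fst \<mu> > 0" "snd \<mu> \<ge> 0"
  shows "ray_params P \<theta> r0 \<mu> \<noteq> {}"
proof -
  obtain y w where y: "(y, w) \<in> Pi_KC P r0 (z2star P r0)" using min_time by auto
  have z1: "z1star P r0 \<le> J1 (y 1) (z2star P r0)" "- m_max P \<le> z1star P r0"
    using z1star_le_J1[OF y z2] z1star_ge_neg_m_max[OF y z2] by auto
  define \<tau> where "\<tau> = (J1 (y 1) (z2star P r0) - z1star P r0) / fst \<mu>"
  have "\<tau> \<ge> 0" unfolding \<tau>_def using z1 \<mu> by simp
  moreover have "\<theta> r0 (z1star P r0 + fst \<mu> * \<tau>, z2star P r0 + snd \<mu> * \<tau>) \<le> 0"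
  proof (rule feasible[OF z2 y])
    show "J1 (y 1) (z2star P r0) \<le> z1star P r0 + fst \<mu> * \<tau>"
      unfolding \<tau>_def using \<mu> by simp
    show "J2 (y 1) (z2star P r0) \<le> z2star P r0 + snd \<mu> * \<tau>"
      unfolding J2_def using \<mu> \<open>\<tau> \<ge> 0\<close> by simp
  qed
  moreover have "J1 (y 1) (z2star P r0) - z1star P r0 < m_prop P"
    using J1_final_bounds(2)[OF y] z1 unfolding m_min_def m_max_def by simp
  then have "\<tau> < m_prop P / fst \<mu>"
    unfolding \<tau>_def using \<mu> by (simp add: divide_strict_right_mono)
  ultimately have "\<tau> \<in> ray_params P \<theta> r0 \<mu>"
    unfolding ray_params_pos[OF \<mu>(1)] by blast
  then show ?thesis by blast
qed

lemma exists_smaller_ray_parameter: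
  fixes z1 z2 m1 m2 b1 b2 t :: real
  assumes "m1 > 0" "m2 > 0" "z1 \<le> b1" "z2 \<le> b2" "b1 < z1 + m1 * t" "b2 < z2 + m2 * t"
  obtains \<tau> where "0 \<le> \<tau>" "\<tau> < t" "b1 \<le> z1 + m1 * \<tau>" "b2 \<le> z2 + m2 * \<tau>"
proof
  define a1 a2 where "a1 = (b1 - z1) / m1" and "a2 = (b2 - z2) / m2"
  have b: "b1 = z1 + m1 * a1" "b2 = z2 + m2 * a2"
    unfolding a1_def a2_def using assms(1,2) by simp_all
  show "0 \<le> max a1 a2" unfolding a1_def using assms(1,3) by (simp add: le_max_iff_disj)
  show "max a1 a2 < t" using assms b by (simp add: mult_less_cancel_left_pos)
  show "b1 \<le> z1 + m1 * max a1 a2" "b2 \<le> z2 + m2 * max a1 a2"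
    using assms(1,2) b by (simp_all add: mult_left_mono)
qed

lemma Sigma_point_weakly_Pareto:
  assumes feasible: "\<And>tf r u z1 z2. tf \<ge> 0 \<Longrightarrow> (r, u) \<in> Pi_KC P r0 tf \<Longrightarrow>
        J1 (r 1) tf \<le> z1 \<Longrightarrow> J2 (r 1) tf \<le> z2 \<Longrightarrow> \<theta> r0 (z1, z2) \<le> 0"
    and min_time: "Pi_KC P r0 (z2star P r0) \<noteq> {}"
    and \<mu>: "0 \<le> fst \<mu>" "0 \<le> snd \<mu>"
    and r: "(r, u) \<in> Pi_KC P r0 tf" "tf \<ge> 0"
    and r_le1: "ereal (J1 (r 1) tf) \<le> ereal (z1star P r0) + ereal (fst \<mu>) * Theta P \<theta> r0 \<mu>"
    and r_le2: "ereal (J2 (r 1) tf) \<le> ereal (z2star P r0) + ereal (snd \<mu>) * Theta P \<theta> r0 \<mu>"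
    and x: "(x, v) \<in> Pi_KC P r0 tf'" "tf' \<ge> 0"
  shows "\<not> (J1 (x 1) tf' < J1 (r 1) tf \<and> J2 (x 1) tf' < J2 (r 1) tf)"
proof
  assume strict: "J1 (x 1) tf' < J1 (r 1) tf \<and> J2 (x 1) tf' < J2 (r 1) tf"
  have x_above: "z1star P r0 \<le> J1 (x 1) tf'" "z2star P r0 \<le> J2 (x 1) tf'"
    using z1star_le_J1[OF x] z2star_le_J2[OF x] .
  consider "fst \<mu> = 0" | "snd \<mu> = 0" | "fst \<mu> > 0" "snd \<mu> > 0" using \<mu> by linarith
  then show False
  proof cases
    case 1
    \<comment> \<open>\<open>0 * \<infinity> = 0\<close> in \<open>ereal\<close>, so this holds even if \<open>\<Theta>(\<mu>) = \<infinity>\<close>.\<close>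
    then show False using r_le1 x_above strict by (simp add: zero_ereal_def[symmetric])
  next
    case 2
    then show False using r_le2 x_above strict by (simp add: zero_ereal_def[symmetric])
  next
    case 3
    let ?S = "ray_params P \<theta> r0 \<mu>"
    have S_ne: "?S \<noteq> {}"
      using ray_params_nonempty[where \<theta> = \<theta>, OF feasible min_time z2star_nonneg[OF x]] 3
      by simp
    define t where "t = Inf ?S"
    have "J1 (r 1) tf \<le> z1star P r0 + fst \<mu> * t" "J2 (r 1) tf \<le> z2star P r0 + snd \<mu> * t"
      using r_le1 r_le2 Theta_eq_ereal_Inf[OF S_ne] unfolding t_def by simp_all
    then have "J1 (x 1) tf' < z1star P r0 + fst \<mu> * t" "J2 (x 1) tf' < z2star P r0 + snd \<mu> * t"
      using strict by linarith+
    then obtain \<tau> where \<tau>: "0 \<le> \<tau>" "\<tau> < t"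
        "J1 (x 1) tf' \<le> z1star P r0 + fst \<mu> * \<tau>" "J2 (x 1) tf' \<le> z2star P r0 + snd \<mu> * \<tau>"
      using exists_smaller_ray_parameter[OF 3 x_above] by blast
    have "\<theta> r0 (z1star P r0 + fst \<mu> * \<tau>, z2star P r0 + snd \<mu> * \<tau>) \<le> 0"
      using feasible[OF x(2,1) \<tau>(3,4)] .
    moreover have "t < m_prop P / fst \<mu>"
      using Inf_ray_params_less 3 S_ne unfolding t_def by simp
    ultimately have "\<tau> \<in> ?S"
      using \<tau>(1,2) 3 by (simp add: ray_params_pos)
    then have "t \<le> \<tau>" unfolding t_def by (rule cInf_lower[OF _ bdd_below_ray_params])
    with \<tau>(2) show False by simp
  qed
qed

text \<open>Only the implication from attainability to \<open>\<theta> \<le> 0\<close> in hypothesis (i) is needed.\<close>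

theorem theorem1:
  fixes P :: mission and r0 :: "real^7" and \<theta> :: "real^7 \<Rightarrow> real \<times> real \<Rightarrow> real"
  assumes valid: "valid_mission P"
    and C_ne: "Cset P \<noteq> {}" and C_closed: "closed (Cset P)"
    and hyp_i: "\<And>z1 z2. \<theta> r0 (z1, z2) \<le> 0 \<longleftrightarrow>
        (\<exists>tf \<ge> 0. \<exists>(r, u) \<in> Pi_KC P r0 tf. J1 (r 1) tf \<le> z1 \<and> J2 (r 1) tf \<le> z2)"
    and hyp_ii: "\<And>z1 z2 z1' z2'. z1 \<le> z1' \<Longrightarrow> z2 \<le> z2' \<Longrightarrow>
        \<theta> r0 (z1, z2) \<ge> \<theta> r0 (z1', z2')"
    and nonempty: "Pi_KC P r0 (z2star P r0) \<noteq> {}"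
  shows "\<forall>z \<in> Sigma_set P \<theta> r0. \<forall>tf \<ge> 0. \<forall>(r, u) \<in> Pi_KC P r0 tf.
           ereal (J1 (r 1) tf) \<le> fst z \<and> ereal (J2 (r 1) tf) \<le> snd z \<longrightarrow>
           \<not> (\<exists>tf' \<ge> 0. \<exists>(x, v) \<in> Pi_KC P r0 tf'.
                 J1 (x 1) tf' < J1 (r 1) tf \<and> J2 (x 1) tf' < J2 (r 1) tf)"
proof -
  have feasible: "\<And>tf r u z1 z2. tf \<ge> 0 \<Longrightarrow> (r, u) \<in> Pi_KC P r0 tf \<Longrightarrow>
      J1 (r 1) tf \<le> z1 \<Longrightarrow> J2 (r 1) tf \<le> z2 \<Longrightarrow> \<theta> r0 (z1, z2) \<le> 0"
    using hyp_i by blast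
  have False
    if z_in: "z \<in> Sigma_set P \<theta> r0"
      and r: "tf \<ge> 0" "(r, u) \<in> Pi_KC P r0 tf"
      and r_le: "ereal (J1 (r 1) tf) \<le> fst z" "ereal (J2 (r 1) tf) \<le> snd z"
      and x: "tf' \<ge> 0" "(x, v) \<in> Pi_KC P r0 tf'"
      and strict: "J1 (x 1) tf' < J1 (r 1) tf" "J2 (x 1) tf' < J2 (r 1) tf"
    for z tf r u tf' x v
  proof -
    obtain \<mu> where \<mu>: "0 \<le> fst \<mu>" "0 \<le> snd \<mu>"
      and z: "z = (ereal (z1star P r0) + ereal (fst \<mu>) * Theta P \<theta> r0 \<mu>,
                   ereal (z2star P r0) + ereal (snd \<mu>) * Theta P \<theta> r0 \<mu>)"
      using z_in unfolding Sigma_set_def by blast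
    show False
      using Sigma_point_weakly_Pareto[where \<theta> = \<theta>, OF feasible nonempty \<mu> r(2,1) _ _ x(2,1)]
        r_le strict z
      by simp
  qed
  then show ?thesis by blast
qed

end
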